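(* Let $\alpha\in(0,1)$, $\lambda\in(0,\tfrac12)$, and let $\Gamma^*$ be defined by the exponential formula $\Gamma^*=\sum_{j\ge0}\frac1{j!}\sum_{\mathbf n_1,\dots,\mathbf n_j}\pi^{(\mathbf n_1)}\cdots\pi^{(\mathbf n_j)}D^{(\mathbf n_1)}\cdots D^{(\mathbf n_j)}$ from a family $\{\pi^{(\mathbf n)}\}_{\mathbf n\in\mathbb N_0^{1+d}}\subset\mathsf T^*$ with $\pi^{(\mathbf n)}_\beta\ne0\Rightarrow|\beta|>|\mathbf n|$. Then for all multiindices $\beta,\gamma$ (not necessarily populated): (a) $(\Gamma^* )_\beta^\gamma$, as a function of the coefficients $\{\pi^{(\mathbf n)}_{\beta'}\}$, does not depend on $\pi^{(\mathbf n)}_{\beta'}$ unless $|\beta'|_\prec\le|\beta|_\prec$; (b) if $\sum_\ell\gamma(\ell)>0$, then $(\Gamma^* )_\beta^\gamma$ does not depend on $\pi^{(\mathbf n)}_{\beta'}$ unless $|\beta'|_\prec<|\beta|_\prec$; (c) $(\Gamma^*-\mathrm{id})_\beta^\gamma\ne0$ implies $|\gamma|_\prec<|\beta|_\prec$ and $|\gamma|<|\beta|$.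
   Context: Multiindices: finitely supported maps $\beta:\mathbb N_0\,\dot\cup\,\mathbb N_0\,\dot\cup\,(\mathbb N_0^{1+d}\setminus\{\mathbf0\})\to\mathbb N_0$ (elements $k$ of the first copy, $\ell$ of the second, $\mathbf n$ of the third). Monomials $\mathsf z^\beta=\prod_k\mathsf a_k^{\beta(k)}\prod_\ell\mathsf b_\ell^{\beta(\ell)}\prod_{\mathbf n\ne\mathbf0}\mathsf p_{\mathbf n}^{\beta(\mathbf n)}$ in the formal power series ring $\mathbb R[[\mathsf a_k,\mathsf b_\ell,\mathsf p_{\mathbf n}]]$; matrix coefficients $A\mathsf z^\gamma=\sum_\beta A_\beta^\gamma\mathsf z^\beta$. With $\mathfrak s=(4,1,\dots,1)$, $|\mathbf n|:=\sum_i\mathfrak s_i\mathbf n_i$; $[\beta]:=\sum_kk\beta(k)+\sum_\ell\ell\beta(\ell)-\sum_{\mathbf n\ne\mathbf0}\beta(\mathbf n)$, $|\beta|_p:=\sum_{\mathbf n\ne\mathbf0}|\mathbf n|\beta(\mathbf n)$, homogeneity $|\beta|:=\alpha(1+[\beta])+|\beta|_p$; weighted length $|\beta|_\prec:=\sum_k\beta(k)+\sum_\ell\beta(\ell)+\lambda\sum_{\mathbf n\ne\mathbf0}|\mathbf n|\beta(\mathbf n)$. $\beta$ is populated if $1+\sum_kk\beta(k)+\sum_\ell\ell\beta(\ell)=\sum_\ell\beta(\ell)+\sum_{\mathbf n\ne\mathbf0}\beta(\mathbf n)$ and ($\beta=g_{\mathbf n}$ for some $\mathbf n\neq\mathbf0$,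 or $\sum_\ell\beta(\ell)>0$); $\mathsf T^*:=\{\pi:\pi_\beta\ne0\Rightarrow\beta\text{ populated}\}$. Derivations: $D^{(\mathbf0)}:=\sum_k(k+1)\mathsf a_{k+1}\partial_{\mathsf a_k}+\sum_\ell(\ell+1)\mathsf b_{\ell+1}\partial_{\mathsf b_\ell}$, $D^{(\mathbf n)}:=\partial_{\mathsf p_{\mathbf n}}$ for $\mathbf n\ne\mathbf0$. (Under these assumptions all matrix coefficients of $\Gamma^*$ are finite sums.) *)

theory Defs
  imports "HOL-Analysis.Analysis"
begin

text \<open>Variables of the power series ring: a_k, b_l, p_n.  The index n of p_n is an
element of N_0^(1+d), represented as a list of length 1+d (entry 0 is the time component,
which carries scaling weight 4).\<close>

datatype var = VA nat | VB nat | VP "nat list"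

type_synonym mi = "var \<Rightarrow> nat"
type_synonym ps = "mi \<Rightarrow> real"

definition zeroidx :: "nat \<Rightarrow> nat list" where
  "zeroidx d = replicate (Suc d) 0"

definition Idx :: "nat \<Rightarrow> nat list set" where
  "Idx d = {n. length n = Suc d}"

definition NZIdx :: "nat \<Rightarrow> nat list set" where
  "NZIdx d = {n. length n = Suc d \<and> n \<noteq> zeroidx d}"

definition multiindex :: "nat \<Rightarrow> mi \<Rightarrow> bool" where
  "multiindex d \<beta> \<longleftrightarrow> finite {v. \<beta> v \<noteq> 0} \<and> (\<forall>n. \<beta> (VP n) \<noteq> 0 \<longrightarrow> n \<in> NZIdx d)"

definition wsum :: "(var \<Rightarrow> real) \<Rightarrow> mi \<Rightarrow> real" where
  "wsum w \<beta> = (\<Sum>v\<in>{v. \<beta> v \<noteq> 0}. w v * real (\<beta> v))"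

definition nnorm :: "nat list \<Rightarrow> real" where
  "nnorm n = real (4 * hd n + sum_list (tl n))"

definition bracket :: "mi \<Rightarrow> real" where
  "bracket \<beta> = wsum (\<lambda>v. case v of VA k \<Rightarrow> real k | VB l \<Rightarrow> real l | VP n \<Rightarrow> -1) \<beta>"

definition pnorm :: "mi \<Rightarrow> real" where
  "pnorm \<beta> = wsum (\<lambda>v. case v of VP n \<Rightarrow> nnorm n | _ \<Rightarrow> 0) \<beta>"

definition hom :: "real \<Rightarrow> mi \<Rightarrow> real" where
  "hom \<alpha> \<beta> = \<alpha> * (1 + bracket \<beta>) + pnorm \<beta>"

definition wlen :: "real \<Rightarrow> mi \<Rightarrow> real" where
  "wlen lam \<beta> = wsum (\<lambda>v. case v of VA _ \<Rightarrow> 1 | VB _ \<Rightarrow> 1 | VP n \<Rightarrow> lam * nnorm n) \<beta>"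

definition gidx :: "nat list \<Rightarrow> mi" where
  "gidx n = (\<lambda>v. if v = VP n then 1 else 0)"

definition populated :: "nat \<Rightarrow> mi \<Rightarrow> bool" where
  "populated d \<beta> \<longleftrightarrow>
     1 + wsum (\<lambda>v. case v of VA k \<Rightarrow> real k | VB l \<Rightarrow> real l | VP _ \<Rightarrow> 0) \<beta>
       = wsum (\<lambda>v. case v of VA _ \<Rightarrow> 0 | VB _ \<Rightarrow> 1 | VP _ \<Rightarrow> 1) \<beta>
     \<and> ((\<exists>n\<in>NZIdx d. \<beta> = gidx n) \<or> (\<exists>l. \<beta> (VB l) > 0))"

definition Tstar :: "nat \<Rightarrow> ps \<Rightarrow> bool" where
  "Tstar d \<pi> \<longleftrightarrow> (\<forall>\<beta>. \<pi> \<beta> \<noteq> 0 \<longrightarrow> multiindex d \<beta> \<and> populated d \<beta>)"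

definition monom :: "mi \<Rightarrow> ps" where
  "monom \<gamma> = (\<lambda>\<beta>. if \<beta> = \<gamma> then 1 else 0)"

definition ps_one :: ps where
  "ps_one = monom (\<lambda>_. 0)"

definition ps_times :: "ps \<Rightarrow> ps \<Rightarrow> ps" where
  "ps_times f g = (\<lambda>\<beta>. \<Sum>\<beta>1\<in>{\<beta>1. \<forall>v. \<beta>1 v \<le> \<beta> v}. f \<beta>1 * g (\<lambda>v. \<beta> v - \<beta>1 v))"

text \<open>D^(0) = sum_k (k+1) a_(k+1) d/da_k + sum_l (l+1) b_(l+1) d/db_l\<close>
definition D0 :: "ps \<Rightarrow> ps" where
  "D0 f = (\<lambda>\<beta>.
     (\<Sum>k\<in>{k. 0 < \<beta> (VA (Suc k))}. real (k + 1) * real (\<beta> (VA k) + 1) *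
         f (\<beta>(VA (Suc k) := \<beta> (VA (Suc k)) - 1, VA k := \<beta> (VA k) + 1)))
   + (\<Sum>l\<in>{l. 0 < \<beta> (VB (Suc l))}. real (l + 1) * real (\<beta> (VB l) + 1) *
         f (\<beta>(VB (Suc l) := \<beta> (VB (Suc l)) - 1, VB l := \<beta> (VB l) + 1))))"

text \<open>D^(n) = d/dp_n for n \<noteq> 0\<close>
definition Dp :: "nat list \<Rightarrow> ps \<Rightarrow> ps" where
  "Dp n f = (\<lambda>\<beta>. real (\<beta> (VP n) + 1) * f (\<beta>(VP n := \<beta> (VP n) + 1)))"

definition Dop :: "nat \<Rightarrow> nat list \<Rightarrow> ps \<Rightarrow> ps" where
  "Dop d n = (if n = zeroidx d then D0 else Dp n)"

text \<open>Gamma^* = sum_j 1/j! sum_(n_1..n_j) pi^(n_1)...pi^(n_j) D^(n_1)...D^(n_j);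
 its matrix coefficient (Gamma^*)_beta^gamma is the coefficient of z^beta in Gamma^* z^gamma.
 The pair (j, (n_1,...,n_j)) is encoded as a list ns of length j.\<close>
definition Gamma_term :: "nat \<Rightarrow> (nat list \<Rightarrow> ps) \<Rightarrow> mi \<Rightarrow> mi \<Rightarrow> nat list list \<Rightarrow> real" where
  "Gamma_term d \<pi> \<beta> \<gamma> ns =
     (1 / fact (length ns)) *
     ps_times (foldr ps_times (map \<pi> ns) ps_one) (foldr (Dop d) ns (monom \<gamma>)) \<beta>"

definition Gamma_star :: "nat \<Rightarrow> (nat list \<Rightarrow> ps) \<Rightarrow> mi \<Rightarrow> mi \<Rightarrow> real" where
  "Gamma_star d \<pi> \<beta> \<gamma> = infsum (Gamma_term d \<pi> \<beta> \<gamma>) {ns. set ns \<subseteq> Idx d}"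

definition admissible :: "nat \<Rightarrow> real \<Rightarrow> (nat list \<Rightarrow> ps) \<Rightarrow> bool" where
  "admissible d \<alpha> \<pi> \<longleftrightarrow>
     (\<forall>n\<in>Idx d. Tstar d (\<pi> n) \<and> (\<forall>\<beta>. \<pi> n \<beta> \<noteq> 0 \<longrightarrow> hom \<alpha> \<beta> > nnorm n))"

end

theory Submission
  imports Defs
begin

text \<open>
  The homogeneity and the weighted length are linear functionals \<open>wsum w\<close> of the multiindex
  (the former up to the constant \<alpha>). A nonzero contribution of
  \<pi>^(n_1) ... \<pi>^(n_j) D^(n_1) ... D^(n_j) z^\<gamma> at \<beta> comes from a splitting \<beta> = \<beta>_1 + \<delta>, where \<delta>
  is reached from \<gamma> by the derivatives, each of which lowers the weight by an exact amount,
  and \<beta>_1 is a sum of j multiindices from the supports of the \<pi>^(n_i), each of weight strictly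
  larger than that amount. So for j \<ge> 1 both weights strictly increase from \<gamma> to \<beta>, which is (c).
  For the weighted length the per-factor bound \<lambda>|n| < |\<beta>'|_\<prec> follows from |\<beta>'| > |n|,
  since on populated multiindices 1 + [\<beta>'] counts the b-variables and hence
  \<lambda>|\<beta>'| \<le> |\<beta>'|_\<prec> once \<lambda>\<alpha> \<le> 1.
  For (a) and (b): only coefficients \<pi>^(n)_\<beta>' with \<beta>' \<le> \<beta>_1 \<le> \<beta> enter, and if \<gamma> contains
  some b-variable then so does \<delta>, which forces |\<beta>_1|_\<prec> < |\<beta>|_\<prec>.
\<close>

lemma support_mono:
  fixes \<beta> \<beta>' :: mi
  shows "(\<And>v. \<beta>' v \<le> \<beta> v) \<Longrightarrow> {v. \<beta>' v \<noteq> 0} \<subseteq> {v. \<beta> v \<noteq> 0}"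
  by (metis (mono_tags) Collect_mono le_zero_eq)

lemma wsum_eq_sum_superset:
  assumes "finite S" "{v. \<beta> v \<noteq> 0} \<subseteq> S"
  shows "wsum w \<beta> = (\<Sum>v\<in>S. w v * real (\<beta> v))"
  unfolding wsum_def by (rule sum.mono_neutral_left) (use assms in auto)

lemma wsum_zero [simp]: "wsum w (\<lambda>_. 0) = 0"
  by (simp add: wsum_def)

lemma wsum_nonneg: "(\<And>v. 0 \<le> w v) \<Longrightarrow> 0 \<le> wsum w \<beta>"
  unfolding wsum_def by (auto intro: sum_nonneg)

lemma wsum_add_weights: "wsum (\<lambda>v. f v + g v) \<beta> = wsum f \<beta> + wsum g \<beta>"
  unfolding wsum_def by (simp add: sum.distrib algebra_simps)

lemma wsum_scale_weight: "wsum (\<lambda>v. c * f v) \<beta> = c * wsum f \<beta>"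
  unfolding wsum_def by (simp add: sum_distrib_left algebra_simps)

lemma wsum_mono_weight: "(\<And>v. w v \<le> w' v) \<Longrightarrow> wsum w \<beta> \<le> wsum w' \<beta>"
  unfolding wsum_def by (auto intro!: sum_mono mult_right_mono)

lemma finite_support_fun_upd:
  "finite {v. \<beta> v \<noteq> 0} \<Longrightarrow> finite {v. (\<beta>(u := x)) v \<noteq> 0}"
  by (rule finite_subset[of _ "insert u {v. \<beta> v \<noteq> 0}"]) auto

lemma wsum_fun_upd:
  assumes "finite {v. \<beta> v \<noteq> 0}"
  shows "wsum w (\<beta>(u := x)) = wsum w \<beta> + w u * (real x - real (\<beta> u))"
proof -
  let ?S = "insert u {v. \<beta> v \<noteq> 0}"
  have S: "finite ?S" "u \<in> ?S" using assms by auto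
  have "wsum w (\<beta>(u := x)) = (\<Sum>v\<in>?S. w v * real ((\<beta>(u := x)) v))"
    by (rule wsum_eq_sum_superset[OF S(1)]) auto
  also have "\<dots> = w u * real x + (\<Sum>v\<in>?S - {u}. w v * real ((\<beta>(u := x)) v))"
    unfolding sum.remove[OF S] by simp
  also have "\<dots> = w u * real x + (\<Sum>v\<in>?S - {u}. w v * real (\<beta> v))"
    by (auto intro!: sum.cong)
  moreover have "wsum w \<beta> = w u * real (\<beta> u) + (\<Sum>v\<in>?S - {u}. w v * real (\<beta> v))"
    unfolding wsum_eq_sum_superset[OF S(1), of \<beta> w, OF subset_insertI] sum.remove[OF S] ..
  ultimately show ?thesis by (simp add: algebra_simps)
qed

lemma wsum_move_unit:
  assumes "finite {v. \<delta> v \<noteq> 0}" "0 < \<delta> u" "u \<noteq> u'"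
  shows "wsum w (\<delta>(u := \<delta> u - 1, u' := \<delta> u' + 1)) = wsum w \<delta> - w u + w u'"
proof -
  let ?\<delta>' = "\<delta>(u := \<delta> u - 1)"
  have "wsum w ?\<delta>' = wsum w \<delta> - w u"
    using wsum_fun_upd[OF assms(1), of w u "\<delta> u - 1"] assms(2) by (simp add: of_nat_diff)
  moreover have "?\<delta>' u' = \<delta> u'" using assms(3) by simp
  ultimately show ?thesis
    using wsum_fun_upd[OF finite_support_fun_upd[OF assms(1), of u "\<delta> u - 1"], of w u' "\<delta> u' + 1"]
    by (simp del: fun_upd_apply)
qed

lemma wsum_split:
  assumes "finite {v. \<beta> v \<noteq> 0}" "\<And>v. \<beta>\<^sub>1 v \<le> \<beta> v"
  shows "wsum w \<beta> = wsum w \<beta>\<^sub>1 + wsum w (\<lambda>v. \<beta> v - \<beta>\<^sub>1 v)"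
proof -
  let ?S = "{v. \<beta> v \<noteq> 0}"
  have supp: "{v. \<beta>\<^sub>1 v \<noteq> 0} \<subseteq> ?S" "{v. \<beta> v - \<beta>\<^sub>1 v \<noteq> 0} \<subseteq> ?S"
    by (intro support_mono; simp add: assms(2))+
  have "(\<Sum>v\<in>?S. w v * real (\<beta> v)) =
        (\<Sum>v\<in>?S. w v * real (\<beta>\<^sub>1 v)) + (\<Sum>v\<in>?S. w v * real (\<beta> v - \<beta>\<^sub>1 v))"
    using assms(2) by (simp add: of_nat_diff algebra_simps flip: sum.distrib)
  then show ?thesis
    unfolding wsum_eq_sum_superset[OF assms(1) order_refl]
      wsum_eq_sum_superset[OF assms(1) supp(1)] wsum_eq_sum_superset[OF assms(1) supp(2)] .
qed

lemma wsum_mono_le: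
  assumes "finite {v. \<beta> v \<noteq> 0}" "\<And>v. \<beta>' v \<le> \<beta> v" "\<And>v. 0 \<le> w v"
  shows "wsum w \<beta>' \<le> wsum w \<beta>"
  using wsum_split[OF assms(1,2), of w] wsum_nonneg[OF assms(3)] by simp

lemma wsum_ge_single:
  assumes "finite {v. \<beta> v \<noteq> 0}" "\<And>v. 0 \<le> w v"
  shows "w u * real (\<beta> u) \<le> wsum w \<beta>"
proof (cases "\<beta> u = 0")
  case True
  then show ?thesis using wsum_nonneg[of w \<beta>] assms(2) by simp
next
  case False
  then show ?thesis
    unfolding wsum_def
    using member_le_sum[of u "{v. \<beta> v \<noteq> 0}" "\<lambda>v. w v * real (\<beta> v)"] assms by auto
qed

lemma finite_support_le:
  fixes \<beta> \<beta>' :: mi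
  assumes "finite {v. \<beta> v \<noteq> 0}" "\<And>v. \<beta>' v \<le> \<beta> v"
  shows "finite {v. \<beta>' v \<noteq> 0}"
  by (rule finite_subset[OF support_mono[OF assms(2)] assms(1)])

lemma multiindex_le:
  assumes "multiindex d \<beta>" "\<And>v. \<beta>' v \<le> \<beta> v"
  shows "multiindex d \<beta>'"
proof -
  have "finite {v. \<beta>' v \<noteq> 0}"
    using assms(1) finite_support_le[OF _ assms(2)] unfolding multiindex_def by simp
  moreover have "n \<in> NZIdx d" if "\<beta>' (VP n) \<noteq> 0" for n
    using support_mono[OF assms(2)] that assms(1) unfolding multiindex_def by blast
  ultimately show ?thesis unfolding multiindex_def by blast
qed

lemma finite_below:
  assumes "finite {v. \<beta> v \<noteq> 0}"
  shows "finite {\<beta>\<^sub>1 :: mi. \<forall>v. \<beta>\<^sub>1 v \<le> \<beta> v}"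
proof -
  let ?S = "{v. \<beta> v \<noteq> 0}"
  have "{\<beta>\<^sub>1 :: mi. \<forall>v. \<beta>\<^sub>1 v \<le> \<beta> v}
        \<subseteq> {f. \<forall>v. (v \<in> ?S \<longrightarrow> f v \<in> {..Max (\<beta> ` ?S)}) \<and> (v \<notin> ?S \<longrightarrow> f v = 0)}"
    using assms by (auto intro: le_trans Max_ge) (metis le_zero_eq)
  then show ?thesis
    by (rule finite_subset) (intro finite_set_of_finite_funs assms finite_atMost)
qed

definition wlen_weight :: "real \<Rightarrow> var \<Rightarrow> real" where
  "wlen_weight lam v = (case v of VA _ \<Rightarrow> 1 | VB _ \<Rightarrow> 1 | VP n \<Rightarrow> lam * nnorm n)"

definition hom_weight :: "real \<Rightarrow> var \<Rightarrow> real" where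
  "hom_weight \<alpha> v = (case v of VA k \<Rightarrow> \<alpha> * real k | VB l \<Rightarrow> \<alpha> * real l | VP n \<Rightarrow> nnorm n - \<alpha>)"

lemma wlen_eq_wsum: "wlen lam \<beta> = wsum (wlen_weight lam) \<beta>"
  unfolding wlen_def wlen_weight_def ..

lemma hom_eq_wsum: "hom \<alpha> \<beta> = \<alpha> + wsum (hom_weight \<alpha>) \<beta>"
proof -
  have hw: "hom_weight \<alpha> = (\<lambda>v. \<alpha> * (case v of VA k \<Rightarrow> real k | VB l \<Rightarrow> real l | VP n \<Rightarrow> -1)
                           + (case v of VP n \<Rightarrow> nnorm n | _ \<Rightarrow> 0))"
    by (rule ext) (simp add: hom_weight_def split: var.split)
  show ?thesis
    unfolding hom_def bracket_def pnorm_def hw wsum_add_weights wsum_scale_weight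
    by (simp add: algebra_simps)
qed

lemma nnorm_nonneg: "0 \<le> nnorm n"
  unfolding nnorm_def by simp

lemma nnorm_zeroidx [simp]: "nnorm (zeroidx d) = 0"
  unfolding nnorm_def zeroidx_def by (simp del: replicate_Suc add: replicate_Suc)

lemma wlen_weight_nonneg: "0 \<le> lam \<Longrightarrow> 0 \<le> wlen_weight lam v"
  unfolding wlen_weight_def by (simp add: nnorm_nonneg split: var.split)

lemma scaled_hom_le_wlen:
  assumes "populated d \<beta>" "0 \<le> lam" "lam * \<alpha> \<le> 1"
  shows "lam * hom \<alpha> \<beta> \<le> wlen lam \<beta>"
proof -
  let ?deg = "\<lambda>v. case v of VA k \<Rightarrow> real k | VB l \<Rightarrow> real l | VP _ \<Rightarrow> 0"
  let ?cnt = "\<lambda>v. case v of VA _ \<Rightarrow> 0 | VB _ \<Rightarrow> 1 | VP _ \<Rightarrow> 1"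
  have "1 + wsum ?deg \<beta> = wsum ?cnt \<beta>"
    using assms(1) unfolding populated_def by blast
  \<comment> \<open>the shape \<open>a + - 1 * b\<close> lets \<open>wsum_add_weights\<close> and \<open>wsum_scale_weight\<close> fold it below\<close>
  then have pop: "wsum ?cnt \<beta> + - 1 * wsum ?deg \<beta> = 1" by simp
  have "lam * hom \<alpha> \<beta> = lam * \<alpha> * (wsum ?cnt \<beta> + - 1 * wsum ?deg \<beta>) + lam * wsum (hom_weight \<alpha>) \<beta>"
    unfolding pop hom_eq_wsum by (simp add: algebra_simps)
  also have "\<dots> = wsum (\<lambda>v. lam * \<alpha> * (?cnt v + - 1 * ?deg v) + lam * hom_weight \<alpha> v) \<beta>"
    unfolding wsum_add_weights wsum_scale_weight ..
  also have "\<dots> \<le> wlen lam \<beta>"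
    unfolding wlen_def using assms(2,3)
    by (intro wsum_mono_weight) (auto simp: hom_weight_def algebra_simps split: var.split)
  finally show ?thesis .
qed

lemma admissible_nnorm_lt_wlen:
  assumes "admissible d \<alpha> \<pi>" "n \<in> Idx d" "\<pi> n \<beta>' \<noteq> 0" "0 < lam" "lam * \<alpha> \<le> 1"
  shows "lam * nnorm n < wlen lam \<beta>'"
proof -
  have "populated d \<beta>'" "nnorm n < hom \<alpha> \<beta>'"
    using assms(1-3) unfolding admissible_def Tstar_def by auto
  have "lam * nnorm n < lam * hom \<alpha> \<beta>'"
    using \<open>nnorm n < hom \<alpha> \<beta>'\<close> assms(4) by simp
  also have "\<dots> \<le> wlen lam \<beta>'"
    using \<open>populated d \<beta>'\<close> assms(4,5) by (intro scaled_hom_le_wlen) auto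
  finally show ?thesis .
qed

lemma Dop_nonzero_cases:
  assumes "Dop d n f \<delta> \<noteq> 0"
  obtains (P) "n \<noteq> zeroidx d" "f (\<delta>(VP n := \<delta> (VP n) + 1)) \<noteq> 0"
  | (A) k where "n = zeroidx d" "0 < \<delta> (VA (Suc k))"
      "f (\<delta>(VA (Suc k) := \<delta> (VA (Suc k)) - 1, VA k := \<delta> (VA k) + 1)) \<noteq> 0"
  | (B) l where "n = zeroidx d" "0 < \<delta> (VB (Suc l))"
      "f (\<delta>(VB (Suc l) := \<delta> (VB (Suc l)) - 1, VB l := \<delta> (VB l) + 1)) \<noteq> 0"
proof (cases "n = zeroidx d")
  case False
  then show ?thesis using assms P unfolding Dop_def Dp_def by auto
next
  case True
  then have "D0 f \<delta> \<noteq> 0" using assms unfolding Dop_def by simp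
  then have "(\<Sum>k\<in>{k. 0 < \<delta> (VA (Suc k))}. real (k + 1) * real (\<delta> (VA k) + 1) *
           f (\<delta>(VA (Suc k) := \<delta> (VA (Suc k)) - 1, VA k := \<delta> (VA k) + 1))) \<noteq> 0 \<or>
        (\<Sum>l\<in>{l. 0 < \<delta> (VB (Suc l))}. real (l + 1) * real (\<delta> (VB l) + 1) *
           f (\<delta>(VB (Suc l) := \<delta> (VB (Suc l)) - 1, VB l := \<delta> (VB l) + 1))) \<noteq> 0"
    unfolding D0_def by auto
  then show ?thesis
  proof
    assume "(\<Sum>k\<in>{k. 0 < \<delta> (VA (Suc k))}. real (k + 1) * real (\<delta> (VA k) + 1) *
              f (\<delta>(VA (Suc k) := \<delta> (VA (Suc k)) - 1, VA k := \<delta> (VA k) + 1))) \<noteq> 0"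
    from sum.not_neutral_contains_not_neutral[OF this] show ?thesis
      using A True by auto
  next
    assume "(\<Sum>l\<in>{l. 0 < \<delta> (VB (Suc l))}. real (l + 1) * real (\<delta> (VB l) + 1) *
              f (\<delta>(VB (Suc l) := \<delta> (VB (Suc l)) - 1, VB l := \<delta> (VB l) + 1))) \<noteq> 0"
    from sum.not_neutral_contains_not_neutral[OF this] show ?thesis
      using B True by auto
  qed
qed

lemma iterated_Dop_keeps_VB:
  assumes "foldr (Dop d) ns (monom \<gamma>) \<delta> \<noteq> 0" "\<gamma> (VB l) > 0"
  shows "\<exists>l. \<delta> (VB l) > 0"
  using assms(1)
proof (induction ns arbitrary: \<delta>)
  case Nil
  then show ?case using assms(2) by (auto simp: monom_def split: if_splits)
next
  case (Cons n ns)
  from Cons.prems have "Dop d n (foldr (Dop d) ns (monom \<gamma>)) \<delta> \<noteq> 0" by simp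
  then show ?case
    by (cases rule: Dop_nonzero_cases) (use Cons.IH in \<open>fastforce+\<close>)
qed

text \<open>The amount by which D^(n) lowers the weight w, provided each substitution
  a_k \<mapsto> a_(k+1), b_l \<mapsto> b_(l+1) performed by D^(0) lowers it by c.\<close>

definition Dop_drop :: "nat \<Rightarrow> (var \<Rightarrow> real) \<Rightarrow> real \<Rightarrow> nat list \<Rightarrow> real" where
  "Dop_drop d w c n = (if n = zeroidx d then c else w (VP n))"

lemma wsum_iterated_Dop:
  assumes "foldr (Dop d) ns (monom \<gamma>) \<delta> \<noteq> 0" "finite {v. \<delta> v \<noteq> 0}"
    and shiftA: "\<And>k. w (VA (Suc k)) = w (VA k) - c"
    and shiftB: "\<And>l. w (VB (Suc l)) = w (VB l) - c"
  shows "wsum w \<delta> = wsum w \<gamma> - (\<Sum>n\<leftarrow>ns. Dop_drop d w c n)"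
  using assms(1,2)
proof (induction ns arbitrary: \<delta>)
  case Nil
  then show ?case by (simp add: monom_def split: if_splits)
next
  case (Cons n ns)
  note fin = finite_support_fun_upd[OF finite_support_fun_upd[OF Cons.prems(2)]]
    finite_support_fun_upd[OF Cons.prems(2)]
  from Cons.prems(1) have "Dop d n (foldr (Dop d) ns (monom \<gamma>)) \<delta> \<noteq> 0" by simp
  then show ?case
  proof (cases rule: Dop_nonzero_cases)
    case P
    have "wsum w (\<delta>(VP n := \<delta> (VP n) + 1)) = wsum w \<delta> + w (VP n)"
      using wsum_fun_upd[OF Cons.prems(2)] by simp
    then show ?thesis using Cons.IH[OF P(2) fin(2)] P(1) by (simp add: Dop_drop_def del: fun_upd_apply)
  next
    case (A k)
    have "wsum w (\<delta>(VA (Suc k) := \<delta> (VA (Suc k)) - 1, VA k := \<delta> (VA k) + 1)) = wsum w \<delta> + c"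
      using wsum_move_unit[OF Cons.prems(2) A(2), of "VA k" w] shiftA[of k] by simp
    then show ?thesis using Cons.IH[OF A(3) fin(1)] A(1) by (simp add: Dop_drop_def del: fun_upd_apply)
  next
    case (B l)
    have "wsum w (\<delta>(VB (Suc l) := \<delta> (VB (Suc l)) - 1, VB l := \<delta> (VB l) + 1)) = wsum w \<delta> + c"
      using wsum_move_unit[OF Cons.prems(2) B(2), of "VB l" w] shiftB[of l] by simp
    then show ?thesis using Cons.IH[OF B(3) fin(1)] B(1) by (simp add: Dop_drop_def del: fun_upd_apply)
  qed
qed

lemma ps_times_nonzero:
  assumes "ps_times f g \<beta> \<noteq> 0"
  obtains \<beta>\<^sub>1 where "\<And>v. \<beta>\<^sub>1 v \<le> \<beta> v" "f \<beta>\<^sub>1 \<noteq> 0" "g (\<lambda>v. \<beta> v - \<beta>\<^sub>1 v) \<noteq> 0"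
  using sum.not_neutral_contains_not_neutral[OF assms[unfolded ps_times_def]] by auto

lemma ps_times_cong:
  "(\<And>\<beta>\<^sub>1. \<forall>v. \<beta>\<^sub>1 v \<le> \<beta> v \<Longrightarrow>
      f \<beta>\<^sub>1 * g (\<lambda>v. \<beta> v - \<beta>\<^sub>1 v) = f' \<beta>\<^sub>1 * g' (\<lambda>v. \<beta> v - \<beta>\<^sub>1 v))
   \<Longrightarrow> ps_times f g \<beta> = ps_times f' g' \<beta>"
  unfolding ps_times_def by (rule sum.cong) auto

lemma wsum_product_coeff:
  assumes "foldr ps_times (map \<pi> ns) ps_one \<beta> \<noteq> 0" "finite {v. \<beta> v \<noteq> 0}"
    and "\<And>n \<beta>'. n \<in> set ns \<Longrightarrow> \<pi> n \<beta>' \<noteq> 0 \<Longrightarrow> g n < wsum w \<beta>'"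
  shows "sum_list (map g ns) \<le> wsum w \<beta> \<and> (ns \<noteq> [] \<longrightarrow> sum_list (map g ns) < wsum w \<beta>)"
  using assms
proof (induction ns arbitrary: \<beta>)
  case Nil
  then show ?case by (simp add: ps_one_def monom_def split: if_splits)
next
  case (Cons n ns)
  from Cons.prems(1) have "ps_times (\<pi> n) (foldr ps_times (map \<pi> ns) ps_one) \<beta> \<noteq> 0" by simp
  then obtain \<beta>\<^sub>1 where le: "\<And>v. \<beta>\<^sub>1 v \<le> \<beta> v" and head: "\<pi> n \<beta>\<^sub>1 \<noteq> 0"
    and tail: "foldr ps_times (map \<pi> ns) ps_one (\<lambda>v. \<beta> v - \<beta>\<^sub>1 v) \<noteq> 0"
    by (elim ps_times_nonzero) blast
  have "sum_list (map g ns) \<le> wsum w (\<lambda>v. \<beta> v - \<beta>\<^sub>1 v)"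
    using Cons.IH[OF tail finite_support_le[OF Cons.prems(2)]] Cons.prems(3) by simp
  moreover have "g n < wsum w \<beta>\<^sub>1" using Cons.prems(3) head by simp
  ultimately show ?case using wsum_split[OF Cons.prems(2) le, of w] by simp
qed

lemma product_coeff_cong:
  "(\<And>n \<beta>'. n \<in> set ns \<Longrightarrow> \<forall>v. \<beta>' v \<le> \<beta> v \<Longrightarrow> \<pi>' n \<beta>' = \<pi> n \<beta>') \<Longrightarrow>
   foldr ps_times (map \<pi>' ns) ps_one \<beta> = foldr ps_times (map \<pi> ns) ps_one \<beta>"
proof (induction ns arbitrary: \<beta>)
  case (Cons n ns)
  show ?case
    unfolding list.map foldr_Cons o_def
  proof (rule ps_times_cong)
    fix \<beta>\<^sub>1 assume le: "\<forall>v. \<beta>\<^sub>1 v \<le> \<beta> v"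
    have "\<pi>' n \<beta>\<^sub>1 = \<pi> n \<beta>\<^sub>1" using Cons.prems le by simp
    moreover have "foldr ps_times (map \<pi>' ns) ps_one (\<lambda>v. \<beta> v - \<beta>\<^sub>1 v) =
                   foldr ps_times (map \<pi> ns) ps_one (\<lambda>v. \<beta> v - \<beta>\<^sub>1 v)"
      by (rule Cons.IH) (use Cons.prems in \<open>meson diff_le_self le_trans list.set_intros(2)\<close>)
    ultimately show "\<pi>' n \<beta>\<^sub>1 * foldr ps_times (map \<pi>' ns) ps_one (\<lambda>v. \<beta> v - \<beta>\<^sub>1 v) =
                     \<pi> n \<beta>\<^sub>1 * foldr ps_times (map \<pi> ns) ps_one (\<lambda>v. \<beta> v - \<beta>\<^sub>1 v)"
      by simp
  qed
qed simp

lemma Gamma_term_Nil: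
  assumes "finite {v. \<beta> v \<noteq> 0}"
  shows "Gamma_term d \<pi> \<beta> \<gamma> [] = (if \<beta> = \<gamma> then 1 else 0)"
proof -
  have "Gamma_term d \<pi> \<beta> \<gamma> [] =
        (\<Sum>\<beta>\<^sub>1\<in>{\<beta>\<^sub>1. \<forall>v. \<beta>\<^sub>1 v \<le> \<beta> v}. ps_one \<beta>\<^sub>1 * monom \<gamma> (\<lambda>v. \<beta> v - \<beta>\<^sub>1 v))"
    unfolding Gamma_term_def ps_times_def by simp
  also have "\<dots> = (\<Sum>\<beta>\<^sub>1\<in>{\<beta>\<^sub>1. \<forall>v. \<beta>\<^sub>1 v \<le> \<beta> v}. if \<beta>\<^sub>1 = (\<lambda>_. 0) then monom \<gamma> \<beta> else 0)"
    by (rule sum.cong) (auto simp: ps_one_def monom_def)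
  also have "\<dots> = monom \<gamma> \<beta>"
    using finite_below[OF assms] by (simp add: sum.delta)
  finally show ?thesis by (simp add: monom_def)
qed

lemma wsum_lt_if_Gamma_term_nonzero:
  assumes "Gamma_term d \<pi> \<beta> \<gamma> ns \<noteq> 0" "ns \<noteq> []" "finite {v. \<beta> v \<noteq> 0}"
    and "\<And>k. w (VA (Suc k)) = w (VA k) - c" "\<And>l. w (VB (Suc l)) = w (VB l) - c"
    and "\<And>n \<beta>'. n \<in> set ns \<Longrightarrow> \<pi> n \<beta>' \<noteq> 0 \<Longrightarrow> Dop_drop d w c n < wsum w \<beta>'"
  shows "wsum w \<gamma> < wsum w \<beta>"
proof -
  have "ps_times (foldr ps_times (map \<pi> ns) ps_one) (foldr (Dop d) ns (monom \<gamma>)) \<beta> \<noteq> 0"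
    using assms(1) unfolding Gamma_term_def by auto
  then obtain \<beta>\<^sub>1 where le: "\<And>v. \<beta>\<^sub>1 v \<le> \<beta> v"
    and prod: "foldr ps_times (map \<pi> ns) ps_one \<beta>\<^sub>1 \<noteq> 0"
    and deriv: "foldr (Dop d) ns (monom \<gamma>) (\<lambda>v. \<beta> v - \<beta>\<^sub>1 v) \<noteq> 0"
    by (elim ps_times_nonzero) blast
  have "(\<Sum>n\<leftarrow>ns. Dop_drop d w c n) < wsum w \<beta>\<^sub>1"
    using wsum_product_coeff[OF prod finite_support_le[OF assms(3) le], of "Dop_drop d w c" w]
      assms(2,6) by blast
  moreover have "wsum w (\<lambda>v. \<beta> v - \<beta>\<^sub>1 v) = wsum w \<gamma> - (\<Sum>n\<leftarrow>ns. Dop_drop d w c n)"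
    using wsum_iterated_Dop[OF deriv finite_support_le[OF assms(3)] assms(4,5)] by simp
  ultimately show ?thesis using wsum_split[OF assms(3) le, of w] by simp
qed

lemma Gamma_term_nonzero_increases_weights:
  assumes "admissible d \<alpha> \<pi>" "0 < lam" "lam * \<alpha> \<le> 1"
    and "set ns \<subseteq> Idx d" "ns \<noteq> []" "Gamma_term d \<pi> \<beta> \<gamma> ns \<noteq> 0" "finite {v. \<beta> v \<noteq> 0}"
  shows "wlen lam \<gamma> < wlen lam \<beta> \<and> hom \<alpha> \<gamma> < hom \<alpha> \<beta>"
proof
  have wlen_drop: "Dop_drop d (wlen_weight lam) 0 n < wsum (wlen_weight lam) \<beta>'"
    if "n \<in> set ns" "\<pi> n \<beta>' \<noteq> 0" for n \<beta>'
    using admissible_nnorm_lt_wlen[OF assms(1) _ that(2) assms(2,3)] that(1) assms(4)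
    by (auto simp: Dop_drop_def wlen_weight_def wlen_eq_wsum)
  have wlen_shift: "wlen_weight lam (VA (Suc k)) = wlen_weight lam (VA k) - 0"
    "wlen_weight lam (VB (Suc k)) = wlen_weight lam (VB k) - 0" for k
    by (simp_all add: wlen_weight_def)
  show "wlen lam \<gamma> < wlen lam \<beta>"
    unfolding wlen_eq_wsum
    by (rule wsum_lt_if_Gamma_term_nonzero[OF assms(6,5,7) wlen_shift wlen_drop])
  have hom_drop: "Dop_drop d (hom_weight \<alpha>) (- \<alpha>) n < wsum (hom_weight \<alpha>) \<beta>'"
    if "n \<in> set ns" "\<pi> n \<beta>' \<noteq> 0" for n \<beta>'
    using assms(1,4) that unfolding admissible_def
    by (force simp: Dop_drop_def hom_weight_def hom_eq_wsum)
  have hom_shift: "hom_weight \<alpha> (VA (Suc k)) = hom_weight \<alpha> (VA k) - - \<alpha>"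
    "hom_weight \<alpha> (VB (Suc k)) = hom_weight \<alpha> (VB k) - - \<alpha>" for k
    by (simp_all add: hom_weight_def algebra_simps)
  show "hom \<alpha> \<gamma> < hom \<alpha> \<beta>"
    unfolding hom_eq_wsum
    using wsum_lt_if_Gamma_term_nonzero[OF assms(6,5,7) hom_shift hom_drop] by simp
qed

lemma Gamma_star_eq_delta:
  assumes "admissible d \<alpha> \<pi>" "0 < lam" "lam * \<alpha> \<le> 1" "finite {v. \<beta> v \<noteq> 0}"
    and "\<not> (wlen lam \<gamma> < wlen lam \<beta> \<and> hom \<alpha> \<gamma> < hom \<alpha> \<beta>)"
  shows "Gamma_star d \<pi> \<beta> \<gamma> = (if \<beta> = \<gamma> then 1 else 0)"
proof -
  have "Gamma_star d \<pi> \<beta> \<gamma> = infsum (Gamma_term d \<pi> \<beta> \<gamma>) {[]}"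
    unfolding Gamma_star_def
    using Gamma_term_nonzero_increases_weights[OF assms(1-3) _ _ _ assms(4)] assms(5)
    by (intro infsum_cong_neutral) auto
  then show ?thesis using Gamma_term_Nil[OF assms(4)] by simp
qed

lemma Gamma_star_cong:
  assumes "\<And>ns n \<beta>\<^sub>1 \<beta>'. set ns \<subseteq> Idx d \<Longrightarrow> n \<in> set ns \<Longrightarrow> \<forall>v. \<beta>\<^sub>1 v \<le> \<beta> v \<Longrightarrow>
      foldr (Dop d) ns (monom \<gamma>) (\<lambda>v. \<beta> v - \<beta>\<^sub>1 v) \<noteq> 0 \<Longrightarrow> \<forall>v. \<beta>' v \<le> \<beta>\<^sub>1 v \<Longrightarrow>
      \<pi>' n \<beta>' = \<pi> n \<beta>'"
  shows "Gamma_star d \<pi>' \<beta> \<gamma> = Gamma_star d \<pi> \<beta> \<gamma>"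
  unfolding Gamma_star_def Gamma_term_def
proof (rule infsum_cong, rule arg_cong2[where f = "(*)"], rule refl, rule ps_times_cong)
  fix ns \<beta>\<^sub>1 assume ns: "ns \<in> {ns. set ns \<subseteq> Idx d}" and le: "\<forall>v. \<beta>\<^sub>1 v \<le> \<beta> v"
  let ?D = "foldr (Dop d) ns (monom \<gamma>) (\<lambda>v. \<beta> v - \<beta>\<^sub>1 v)"
  have "?D \<noteq> 0 \<Longrightarrow> foldr ps_times (map \<pi>' ns) ps_one \<beta>\<^sub>1 = foldr ps_times (map \<pi> ns) ps_one \<beta>\<^sub>1"
    using ns le assms by (intro product_coeff_cong) auto
  then show "foldr ps_times (map \<pi>' ns) ps_one \<beta>\<^sub>1 * ?D = foldr ps_times (map \<pi> ns) ps_one \<beta>\<^sub>1 * ?D"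
    by (cases "?D = 0") auto
qed

lemma Gamma_star_depends_on_wlen_le:
  assumes "multiindex d \<beta>" "0 \<le> lam"
    and "\<forall>n\<in>Idx d. \<forall>\<beta>'. multiindex d \<beta>' \<and> wlen lam \<beta>' \<le> wlen lam \<beta> \<longrightarrow> \<pi>' n \<beta>' = \<pi> n \<beta>'"
  shows "Gamma_star d \<pi>' \<beta> \<gamma> = Gamma_star d \<pi> \<beta> \<gamma>"
proof (rule Gamma_star_cong)
  fix ns n \<beta>\<^sub>1 \<beta>' assume ns: "set ns \<subseteq> Idx d" "n \<in> set ns"
    and le: "\<forall>v. \<beta>\<^sub>1 v \<le> \<beta> v" "\<forall>v. \<beta>' v \<le> \<beta>\<^sub>1 v"
  then have le': "\<And>v. \<beta>' v \<le> \<beta> v" using le_trans by blast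
  have "finite {v. \<beta> v \<noteq> 0}" using assms(1) unfolding multiindex_def by simp
  then have "wlen lam \<beta>' \<le> wlen lam \<beta>"
    unfolding wlen_eq_wsum using le' wlen_weight_nonneg[OF assms(2)] by (rule wsum_mono_le)
  then show "\<pi>' n \<beta>' = \<pi> n \<beta>'"
    using assms(3) ns multiindex_le[OF assms(1) le'] by auto
qed

lemma Gamma_star_depends_on_wlen_lt:
  assumes "multiindex d \<beta>" "0 \<le> lam" "\<gamma> (VB l) > 0"
    and "\<forall>n\<in>Idx d. \<forall>\<beta>'. multiindex d \<beta>' \<and> wlen lam \<beta>' < wlen lam \<beta> \<longrightarrow> \<pi>' n \<beta>' = \<pi> n \<beta>'"
  shows "Gamma_star d \<pi>' \<beta> \<gamma> = Gamma_star d \<pi> \<beta> \<gamma>"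
proof (rule Gamma_star_cong)
  fix ns n \<beta>\<^sub>1 \<beta>' assume ns: "set ns \<subseteq> Idx d" "n \<in> set ns" and le: "\<forall>v. \<beta>\<^sub>1 v \<le> \<beta> v"
    and deriv: "foldr (Dop d) ns (monom \<gamma>) (\<lambda>v. \<beta> v - \<beta>\<^sub>1 v) \<noteq> 0" and le': "\<forall>v. \<beta>' v \<le> \<beta>\<^sub>1 v"
  have fin: "finite {v. \<beta> v \<noteq> 0}" using assms(1) unfolding multiindex_def by simp
  have nonneg: "\<And>v. 0 \<le> wlen_weight lam v" using wlen_weight_nonneg[OF assms(2)] .
  have fin_diff: "finite {v. \<beta> v - \<beta>\<^sub>1 v \<noteq> 0}" by (rule finite_support_le[OF fin]) simp
  have fin1: "finite {v. \<beta>\<^sub>1 v \<noteq> 0}" by (rule finite_support_le[OF fin]) (use le in simp)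
  obtain l' where l': "\<beta> (VB l') - \<beta>\<^sub>1 (VB l') > 0"
    using iterated_Dop_keeps_VB[OF deriv assms(3)] by blast
  have "wlen_weight lam (VB l') * real (\<beta> (VB l') - \<beta>\<^sub>1 (VB l'))
        \<le> wsum (wlen_weight lam) (\<lambda>v. \<beta> v - \<beta>\<^sub>1 v)"
    by (rule wsum_ge_single[OF fin_diff nonneg])
  then have "0 < wsum (wlen_weight lam) (\<lambda>v. \<beta> v - \<beta>\<^sub>1 v)"
    using l' by (simp add: wlen_weight_def)
  moreover have "wlen lam \<beta>' \<le> wlen lam \<beta>\<^sub>1"
    unfolding wlen_eq_wsum using fin1 le' nonneg by (intro wsum_mono_le) auto
  ultimately have "wlen lam \<beta>' < wlen lam \<beta>"
    using wsum_split[OF fin, of \<beta>\<^sub>1 "wlen_weight lam"] le by (simp add: wlen_eq_wsum)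
  moreover have "multiindex d \<beta>'" using multiindex_le[OF assms(1)] le le' le_trans by blast
  ultimately show "\<pi>' n \<beta>' = \<pi> n \<beta>'" using assms(4) ns by auto
qed

theorem mainTheorem5:
  fixes d :: nat and \<alpha> lam :: real and \<pi> :: "nat list \<Rightarrow> ps" and \<beta> \<gamma> :: mi
  assumes "0 < \<alpha>" "\<alpha> < 1" "0 < lam" "lam < 1/2"
    and "admissible d \<alpha> \<pi>"
    and "multiindex d \<beta>" "multiindex d \<gamma>"
  shows
    "(\<forall>\<pi>'. admissible d \<alpha> \<pi>' \<longrightarrow>
        (\<forall>n\<in>Idx d. \<forall>\<beta>'. multiindex d \<beta>' \<and> wlen lam \<beta>' \<le> wlen lam \<beta> \<longrightarrow> \<pi>' n \<beta>' = \<pi> n \<beta>')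
        \<longrightarrow> Gamma_star d \<pi>' \<beta> \<gamma> = Gamma_star d \<pi> \<beta> \<gamma>)
     \<and> ((\<exists>l. \<gamma> (VB l) > 0) \<longrightarrow>
        (\<forall>\<pi>'. admissible d \<alpha> \<pi>' \<longrightarrow>
          (\<forall>n\<in>Idx d. \<forall>\<beta>'. multiindex d \<beta>' \<and> wlen lam \<beta>' < wlen lam \<beta> \<longrightarrow> \<pi>' n \<beta>' = \<pi> n \<beta>')
          \<longrightarrow> Gamma_star d \<pi>' \<beta> \<gamma> = Gamma_star d \<pi> \<beta> \<gamma>))
     \<and> (Gamma_star d \<pi> \<beta> \<gamma> - (if \<beta> = \<gamma> then 1 else 0) \<noteq> 0 \<longrightarrow>
          wlen lam \<gamma> < wlen lam \<beta> \<and> hom \<alpha> \<gamma> < hom \<alpha> \<beta>)"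
proof -
  have lam_alpha: "lam * \<alpha> \<le> 1"
    using assms(1-4) by (intro mult_le_one) auto
  have fin: "finite {v. \<beta> v \<noteq> 0}"
    using assms(6) unfolding multiindex_def by simp
  show ?thesis
  proof (intro conjI impI allI)
    show "Gamma_star d \<pi>' \<beta> \<gamma> = Gamma_star d \<pi> \<beta> \<gamma>"
      if "\<forall>n\<in>Idx d. \<forall>\<beta>'. multiindex d \<beta>' \<and> wlen lam \<beta>' \<le> wlen lam \<beta> \<longrightarrow> \<pi>' n \<beta>' = \<pi> n \<beta>'"
      for \<pi>'
      using Gamma_star_depends_on_wlen_le[OF assms(6) _ that] assms(3) by simp
    show "Gamma_star d \<pi>' \<beta> \<gamma> = Gamma_star d \<pi> \<beta> \<gamma>"
      if VB: "\<exists>l. \<gamma> (VB l) > 0"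
        and agree: "\<forall>n\<in>Idx d. \<forall>\<beta>'. multiindex d \<beta>' \<and> wlen lam \<beta>' < wlen lam \<beta> \<longrightarrow> \<pi>' n \<beta>' = \<pi> n \<beta>'"
      for \<pi>'
    proof -
      obtain l where "\<gamma> (VB l) > 0" using VB by blast
      then show ?thesis using Gamma_star_depends_on_wlen_lt[OF assms(6) _ _ agree] assms(3) by simp
    qed
  qed (use Gamma_star_eq_delta[OF assms(5,3) lam_alpha fin] in auto)
qed

end
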